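(* A value function $\mathfrak I:X\times\mathbb B(X)\to\mathbb R$ satisfies (Dic) $\mathfrak I_x(x)=\mathfrak I_x(\overline x)=1$ for all $x\in X$, (Dum) $\mathfrak I_x(f)=0$ whenever $x\notin\mathrm{dep}(f)$, and cofactor-additivity, if and only if $\mathfrak I=\mathbf I$, i.e. $\mathfrak I_x(f)=\mathbb E[\mathrm D_xf]$ for all $x,f$.
   Context: $X$ is a fixed finite set of variables; $\mathbb B(X)$ is the set of Boolean functions $\{0,1\}^X\to\{0,1\}$; a variable $x$ also denotes $\mathbf u\mapsto\mathbf u(x)$ and $\overline f$ is negation. $f_{z/c}$ is the cofactor of $f$ with $z$ fixed to $c$ (regarded again as an element of $\mathbb B(X)$ not depending on $z$). $\mathrm{dep}(f)=\{x: f_{x/1}\ne f_{x/0}\}$; $\mathrm D_xf=f_{x/1}\oplus f_{x/0}$; $\mathbb E$ is the expectation under the uniform distribution on $\{0,1\}^X$. A value function is any map $\mathfrak I:X\times\mathbb B(X)\to\mathbb R$, $(x,f)\mapsto\mathfrak I_x(f)$. It is cofactor-additive if for all $f\in\mathbb B(X)$ and all variables $x\ne z$: $\mathfrak I_x(f)=\tfrac12\mathfrak I_x(f_{z/0})+\tfrac12\mathfrak I_x(f_{z/1})$. *)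

theory Defs
  imports Complex_Main
begin

text \<open>The finite variable set X is the finite type 'x; an assignment is a map 'x \<Rightarrow> bool
  (elements of {0,1}^X), and a Boolean function is a map ('x \<Rightarrow> bool) \<Rightarrow> bool.\<close>

type_synonym 'x bfun = "('x \<Rightarrow> bool) \<Rightarrow> bool"

definition var :: "'x \<Rightarrow> 'x bfun" where
  "var x = (\<lambda>u. u x)"

definition neg :: "'x bfun \<Rightarrow> 'x bfun" where
  "neg f = (\<lambda>u. \<not> f u)"

definition cofactor :: "'x bfun \<Rightarrow> 'x \<Rightarrow> bool \<Rightarrow> 'x bfun" where
  "cofactor f z c = (\<lambda>u. f (u(z := c)))"

definition dep :: "'x bfun \<Rightarrow> 'x set" where
  "dep f = {x. cofactor f x True \<noteq> cofactor f x False}"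

definition bderiv :: "'x \<Rightarrow> 'x bfun \<Rightarrow> 'x bfun" where
  "bderiv x f = (\<lambda>u. cofactor f x True u \<noteq> cofactor f x False u)"

definition expect :: "('x::finite) bfun \<Rightarrow> real" where
  "expect f = (\<Sum>u\<in>(UNIV :: ('x \<Rightarrow> bool) set). of_bool (f u)) / 2 ^ card (UNIV :: 'x set)"

definition cofactor_additive :: "('x \<Rightarrow> 'x bfun \<Rightarrow> real) \<Rightarrow> bool" where
  "cofactor_additive I \<longleftrightarrow>
     (\<forall>f x z. x \<noteq> z \<longrightarrow> I x f = I x (cofactor f z False) / 2 + I x (cofactor f z True) / 2)"

end

theory Submission
  imports Defs "HOL-Library.Cardinality"
begin

text \<open>Both the value function and \<open>\<lambda>x f. \<bbbE>[D\<^sub>x f]\<close> are cofactor-additive, so by halving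
  along every variable other than \<open>x\<close> their values at \<open>x\<close> are determined by their values on
  functions depending on \<open>x\<close> alone. Such a function is constant, \<open>x\<close> or \<open>\<not>x\<close>, and on these
  (Dic) and (Dum) fix the value to be \<open>\<bbbE>[D\<^sub>x f]\<close>.\<close>

definition depends_only_on :: "'x bfun \<Rightarrow> 'x set \<Rightarrow> bool" where
  "depends_only_on f S \<longleftrightarrow> (\<forall>u v. (\<forall>y\<in>S. u y = v y) \<longrightarrow> f u = f v)"

lemma depends_only_on_UNIV: "depends_only_on f UNIV"
  by (simp add: depends_only_on_def fun_eq_iff[symmetric])

lemma depends_only_on_cofactor:
  "depends_only_on f (insert z S) \<Longrightarrow> depends_only_on (cofactor f z c) S"
  by (simp add: depends_only_on_def cofactor_def)

lemma depends_only_on_singleton_cases: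
  assumes "depends_only_on f {x}"
  obtains "x \<notin> dep f" | "f = var x" | "f = neg (var x)"
proof -
  define a b where "a = f (\<lambda>_. True)" and "b = f (\<lambda>_. False)"
  have "f u = (if u x then a else b)" for u
  proof -
    have "f u = f (\<lambda>_. u x)"
      by (rule assms[unfolded depends_only_on_def, rule_format]) simp
    then show ?thesis
      by (cases "u x") (simp_all add: a_def b_def)
  qed
  then have f_eq: "f = (\<lambda>u. if u x then a else b)"
    by (rule ext)
  consider "a = b" | "a" "\<not> b" | "\<not> a" "b"
    by blast
  then show ?thesis
  proof cases
    case 1
    with that(1) show ?thesis
      by (simp add: f_eq dep_def cofactor_def)
  next
    case 2
    with that(2) show ?thesis
      by (simp add: f_eq var_def)
  next
    case 3
    with that(3) show ?thesis
      by (simp add: f_eq var_def neg_def)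
  qed
qed

lemma bderiv_var: "bderiv x (var x) = (\<lambda>_. True)"
  by (simp add: bderiv_def cofactor_def var_def)

lemma bderiv_neg_var: "bderiv x (neg (var x)) = (\<lambda>_. True)"
  by (simp add: bderiv_def cofactor_def var_def neg_def)

lemma bderiv_not_dep: "x \<notin> dep f \<Longrightarrow> bderiv x f = (\<lambda>_. False)"
  by (simp add: bderiv_def dep_def)

lemma bderiv_cofactor: "x \<noteq> z \<Longrightarrow> bderiv x (cofactor f z c) = cofactor (bderiv x f) z c"
  by (simp add: bderiv_def cofactor_def fun_upd_twist)

lemma expect_const: "expect (\<lambda>_. c) = of_bool c"
  by (simp add: expect_def card_fun)

lemma sum_UNIV_fun_upd_split:
  fixes g :: "('x::finite \<Rightarrow> bool) \<Rightarrow> 'a::semiring_1"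
  shows "2 * (\<Sum>u\<in>UNIV. g u) = (\<Sum>u\<in>UNIV. g (u(z := False))) + (\<Sum>u\<in>UNIV. g (u(z := True)))"
proof -
  have "(\<Sum>u\<in>UNIV. g u) = (\<Sum>u\<in>UNIV. g (u(z := \<not> u z)))"
    by (rule sum.reindex_bij_witness[where i="\<lambda>u. u(z := \<not> u z)" and j="\<lambda>u. u(z := \<not> u z)"])
      simp_all
  then have "2 * (\<Sum>u\<in>UNIV. g u) = (\<Sum>u\<in>UNIV. g u + g (u(z := \<not> u z)))"
    by (simp add: mult_2 sum.distrib)
  also have "\<dots> = (\<Sum>u\<in>UNIV. g (u(z := False)) + g (u(z := True)))"
  proof (rule sum.cong)
    show "g u + g (u(z := \<not> u z)) = g (u(z := False)) + g (u(z := True))" for u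
      by (cases "u z") (simp_all add: fun_upd_idem add.commute)
  qed simp
  finally show ?thesis
    by (simp add: sum.distrib)
qed

lemma expect_cofactor_split:
  "expect (f :: ('x::finite) bfun) = expect (cofactor f z False) / 2 + expect (cofactor f z True) / 2"
  using sum_UNIV_fun_upd_split[of "\<lambda>u. of_bool (f u) :: real" z]
  by (simp add: expect_def cofactor_def field_simps)

lemma cofactor_additiveD:
  "cofactor_additive I \<Longrightarrow> x \<noteq> z \<Longrightarrow> I x f = I x (cofactor f z False) / 2 + I x (cofactor f z True) / 2"
  unfolding cofactor_additive_def by blast

lemma cofactor_additive_expect_bderiv:
  "cofactor_additive (\<lambda>x f. expect (bderiv x (f :: ('x::finite) bfun)))"
  unfolding cofactor_additive_def
  by (metis bderiv_cofactor expect_cofactor_split)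

lemma cofactor_additive_eq_on_depends_only_on:
  assumes "cofactor_additive I" "cofactor_additive J"
    and "\<And>f. depends_only_on f {x} \<Longrightarrow> I x f = J x f"
    and "finite S" "depends_only_on f (insert x S)"
  shows "I x f = J x f"
  using assms(4,5)
proof (induction S arbitrary: f rule: finite_induct)
  case empty
  then show ?case
    using assms(3) by simp
next
  case (insert z S)
  show ?case
  proof (cases "z = x")
    case True
    then show ?thesis
      using insert by simp
  next
    case False
    have "depends_only_on f (insert z (insert x S))"
      using insert.prems by (simp add: insert_commute)
    then have "I x (cofactor f z c) = J x (cofactor f z c)" for c
      by (intro insert.IH depends_only_on_cofactor)
    then show ?thesis
      using cofactor_additiveD[OF assms(1), of x z f] cofactor_additiveD[OF assms(2), of x z f] False
      by simp
  qed
qed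

theorem mainTheorem7:
  fixes I :: "('x::finite) \<Rightarrow> 'x bfun \<Rightarrow> real"
  shows "((\<forall>x. I x (var x) = 1 \<and> I x (neg (var x)) = 1)
          \<and> (\<forall>x f. x \<notin> dep f \<longrightarrow> I x f = 0)
          \<and> cofactor_additive I)
         \<longleftrightarrow> (\<forall>x f. I x f = expect (bderiv x f))"
proof
  assume "(\<forall>x. I x (var x) = 1 \<and> I x (neg (var x)) = 1)
          \<and> (\<forall>x f. x \<notin> dep f \<longrightarrow> I x f = 0)
          \<and> cofactor_additive I"
  then have dic: "\<And>x. I x (var x) = 1 \<and> I x (neg (var x)) = 1"
    and dum: "\<And>x f. x \<notin> dep f \<Longrightarrow> I x f = 0"
    and add: "cofactor_additive I"
    by blast+
  have single: "I x f = expect (bderiv x f)" if "depends_only_on f {x}" for x f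
    using that
    by (cases rule: depends_only_on_singleton_cases)
      (simp_all add: dic dum bderiv_var bderiv_neg_var bderiv_not_dep expect_const)
  show "\<forall>x f. I x f = expect (bderiv x f)"
  proof (intro allI)
    fix x f
    show "I x f = expect (bderiv x f)"
      by (rule cofactor_additive_eq_on_depends_only_on[OF add cofactor_additive_expect_bderiv,
            where S = UNIV]) (simp_all add: single depends_only_on_UNIV)
  qed
next
  assume "\<forall>x f. I x f = expect (bderiv x f)"
  then have "I = (\<lambda>x f. expect (bderiv x f))"
    by (simp add: fun_eq_iff)
  then show "(\<forall>x. I x (var x) = 1 \<and> I x (neg (var x)) = 1)
          \<and> (\<forall>x f. x \<notin> dep f \<longrightarrow> I x f = 0)
          \<and> cofactor_additive I"
    by (simp add: bderiv_var bderiv_neg_var bderiv_not_dep expect_const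
        cofactor_additive_expect_bderiv)
qed

end
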